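(* Let $i,p\ge-1$, $q\ge0$, $0\le j\le 2^i$, $0\le m\le 2^p$, $0\le n\le 2^q$, and let $F(t):=\int_0^t\varphi_{pm}(s)\chi_{qn}(s)\,ds$. Then the coefficient $F_{ij}$ of $F$ satisfies \[ |F_{ij}|\le 2^{-2(i\vee p\vee q)+p+q}, \] except in the case $p<q=i$, in which one has $|F_{ij}|\le1$.
   Context: Index set: pairs $(p,m)$ with either $p=-1,m=0$, or $p\in\mathbb{N}=\{0,1,2,\dots\}$ and $0\le m\le 2^p$. For $p\in\mathbb{N}$, $1\le m\le 2^p$ set $t^0_{pm}=(m-1)2^{-p}$, $t^1_{pm}=(2m-1)2^{-p-1}$, $t^2_{pm}=m2^{-p}$. Rescaled Haar functions: for $p\in\mathbb{N}$, $1\le m\le 2^p$, $\chi_{pm}=2^p$ on $[t^0_{pm},t^1_{pm})$, $=-2^p$ on $[t^1_{pm},t^2_{pm})$, $=0$ elsewhere; $\chi_{00}\equiv1$; $\chi_{p0}\equiv0$ for $p\ge1$. Rescaled Schauder functions: $\varphi_{pm}(t)=\int_0^t\chi_{pm}(s)\,ds$ for $p\in\mathbb{N}$, and $\varphi_{-10}\equiv1$. For continuous $f:[0,1]\to\mathbb{R}$ the coefficients are $f_{-10}=f(0)$, $f_{00}=f(1)-f(0)$, $f_{p0}=0$ for $p\ge1$, $f_{pm}=2f(t^1_{pm})-f(t^0_{pm})-f(t^2_{pm})$ for $p\in\mathbb{N},m\ge1$. $a\vee b=\max(a,b)$. *)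

theory Defs
  imports "HOL-Analysis.Analysis"
begin

definition valid_index :: "int \<Rightarrow> nat \<Rightarrow> bool" where
  "valid_index p m \<longleftrightarrow> (p = -1 \<and> m = 0) \<or> (p \<ge> 0 \<and> m \<le> 2 ^ nat p)"

definition t0 :: "nat \<Rightarrow> nat \<Rightarrow> real" where
  "t0 p m = (real m - 1) / 2 ^ p"
definition t1 :: "nat \<Rightarrow> nat \<Rightarrow> real" where
  "t1 p m = (2 * real m - 1) / 2 ^ (p + 1)"
definition t2 :: "nat \<Rightarrow> nat \<Rightarrow> real" where
  "t2 p m = real m / 2 ^ p"

definition haar :: "nat \<Rightarrow> nat \<Rightarrow> real \<Rightarrow> real" where
  "haar p m t =
     (if m = 0 then (if p = 0 then 1 else 0)
      else if t0 p m \<le> t \<and> t < t1 p m then 2 ^ p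
      else if t1 p m \<le> t \<and> t < t2 p m then - (2 ^ p)
      else 0)"

definition schauder :: "int \<Rightarrow> nat \<Rightarrow> real \<Rightarrow> real" where
  "schauder p m t = (if p < 0 then 1 else integral {0..t} (haar (nat p) m))"

definition coeff :: "(real \<Rightarrow> real) \<Rightarrow> int \<Rightarrow> nat \<Rightarrow> real" where
  "coeff f p m =
     (if p < 0 then f 0
      else if m = 0 then (if p = 0 then f 1 - f 0 else 0)
      else 2 * f (t1 (nat p) m) - f (t0 (nat p) m) - f (t2 (nat p) m))"

end

theory Submission
  imports Defs
begin

text \<open>
  For \<open>i \<ge> 0\<close> and \<open>j \<ge> 1\<close> the coefficient F_ij is the difference of the integrals of
  g = phi_pm chi_qn over the two halves of the dyadic interval [t0_ij, t2_ij] of length 2^-i,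
  and the bound depends on which of the levels i, p, q is finest.
  If q is finest, phi_pm is affine with slope at most 2^p on the support of chi_qn, a dyadic
  interval of level q; integrating it against chi_qn gives 2^q times the slope times 2^(-2q-2),
  and each half of the coarser interval either contains this support or misses it.
  If i is finest, chi_qn is constant and phi_pm is affine on [t0_ij, t2_ij], and the difference
  of the half-integrals is again the slope times the squared half-length.
  If p is finest, |g| \<le> 2^(q-1) and g lives on an interval of length 2^-p.
  When q = i > p no cancellation is available, and only the trivial bound |g| \<le> 2^q on an
  interval of length 2^-i remains.
\<close>


section \<open>Integrals over intervals\<close>

lemma integrable_on_if_bounded_measurable:
  fixes f :: "real \<Rightarrow> real"
  assumes "f \<in> borel_measurable borel" "\<And>x. x \<in> {a..b} \<Longrightarrow> \<bar>f x\<bar> \<le> B"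
  shows "f integrable_on {a..b}"
proof -
  have "f \<in> borel_measurable (lebesgue_on {a..b})"
    using assms(1) by (simp add: measurable_completion measurable_restrict_space1)
  then have "f absolutely_integrable_on {a..b}"
    by (rule measurable_bounded_by_integrable_imp_absolutely_integrable[where g="\<lambda>_. B"])
      (use assms(2) in auto)
  then show ?thesis
    by (simp add: absolutely_integrable_on_def)
qed

lemma integral_cong_interior:
  fixes f g :: "real \<Rightarrow> real"
  assumes "\<And>s. x < s \<Longrightarrow> s < y \<Longrightarrow> f s = g s"
  shows "integral {x..y} f = integral {x..y} g"
  by (rule integral_spike[of "{x, y}"]) (use assms in auto)

lemma integral_const_interior:
  fixes f :: "real \<Rightarrow> real"
  assumes "x \<le> y" "\<And>s. x < s \<Longrightarrow> s < y \<Longrightarrow> f s = c"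
  shows "integral {x..y} f = c * (y - x)"
  using integral_cong_interior[of x y f "\<lambda>_. c"] assms by simp

lemma integral_affine_interior:
  fixes f :: "real \<Rightarrow> real"
  assumes "x \<le> y" "\<And>s. x < s \<Longrightarrow> s < y \<Longrightarrow> f s = \<alpha> + \<beta> * s"
  shows "integral {x..y} f = \<alpha> * (y - x) + \<beta> * (y\<^sup>2 - x\<^sup>2) / 2"
proof -
  define G where "G s = \<alpha> * s + \<beta> * s\<^sup>2 / 2" for s
  have "((\<lambda>s. \<alpha> + \<beta> * s) has_integral G y - G x) {x..y}"
  proof (rule fundamental_theorem_of_calculus[OF assms(1)])
    fix s
    show "(G has_vector_derivative \<alpha> + \<beta> * s) (at s within {x..y})"
      unfolding G_def has_real_derivative_iff_has_vector_derivative[symmetric]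
      by (auto intro!: derivative_eq_intros)
  qed
  then have "integral {x..y} (\<lambda>s. \<alpha> + \<beta> * s) = G y - G x"
    by (rule integral_unique)
  moreover have "integral {x..y} f = integral {x..y} (\<lambda>s. \<alpha> + \<beta> * s)"
    by (rule integral_cong_interior) (use assms(2) in auto)
  ultimately show ?thesis
    by (simp add: G_def field_simps)
qed

lemma integral_halves_diff_affine:
  fixes f :: "real \<Rightarrow> real"
  assumes "a \<le> b" "\<And>s. a < s \<Longrightarrow> s < b \<Longrightarrow> f s = \<alpha> + \<beta> * s"
  shows "integral {a..(a + b) / 2} f - integral {(a + b) / 2..b} f = - \<beta> * ((b - a) / 2)\<^sup>2"
proof -
  have "integral {a..(a + b) / 2} f = \<alpha> * ((a + b) / 2 - a) + \<beta> * (((a + b) / 2)\<^sup>2 - a\<^sup>2) / 2"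
    by (rule integral_affine_interior) (use assms in auto)
  moreover have "integral {(a + b) / 2..b} f = \<alpha> * (b - (a + b) / 2) + \<beta> * (b\<^sup>2 - ((a + b) / 2)\<^sup>2) / 2"
    by (rule integral_affine_interior) (use assms in auto)
  ultimately show ?thesis
    by (simp add: field_simps power2_eq_square)
qed

lemma abs_integral_le:
  fixes f :: "real \<Rightarrow> real"
  assumes "x \<le> y" "f integrable_on {x..y}" "\<And>s. x \<le> s \<Longrightarrow> s \<le> y \<Longrightarrow> \<bar>f s\<bar> \<le> K"
  shows "\<bar>integral {x..y} f\<bar> \<le> K * (y - x)"
proof -
  have "0 \<le> K"
    using assms(1) assms(3)[of x] by force
  have "norm (integral {x..y} f) \<le> K * (y - x)"
    using has_integral_bound_real[OF \<open>0 \<le> K\<close> finite.emptyI integrable_integral[OF assms(2)]]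
      assms(1,3) by auto
  then show ?thesis
    by simp
qed

lemma integral_vanishing_outside:
  fixes f :: "real \<Rightarrow> real"
  assumes int: "\<And>a b. f integrable_on {a..b}" and zero: "\<And>s. s < c \<or> d < s \<Longrightarrow> f s = 0"
  shows "integral {x..y} f = integral {max x c..min y d} f"
proof (cases "max x c \<le> min y d")
  case True
  define u v where "u = max x c" and "v = min y d"
  have uv: "x \<le> u" "u \<le> v" "v \<le> y"
    using True unfolding u_def v_def by auto
  have "integral {x..y} f = integral {x..u} f + integral {u..v} f + integral {v..y} f"
    using uv Henstock_Kurzweil_Integration.integral_combine[OF _ _ int] by (metis order_trans)
  moreover have "integral {x..u} f = 0 * (u - x)"
    by (rule integral_const_interior) (use uv zero in \<open>auto simp: u_def\<close>)
  moreover have "integral {v..y} f = 0 * (y - v)"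
    by (rule integral_const_interior) (use uv zero in \<open>auto simp: v_def\<close>)
  ultimately show ?thesis
    unfolding u_def v_def by simp
next
  case False
  have "integral {x..y} f = 0"
  proof (cases "x \<le> y")
    case True
    have "s < c \<or> d < s" if "x < s" "s < y" for s
      using False that by (auto simp: not_le)
    then have "integral {x..y} f = 0 * (y - x)"
      using True zero by (intro integral_const_interior) auto
    then show ?thesis by simp
  qed simp
  with False show ?thesis
    by simp
qed

lemma abs_integral_le_vanishing_outside:
  fixes f :: "real \<Rightarrow> real"
  assumes "\<And>a b. f integrable_on {a..b}" "c \<le> d" "\<And>s. \<bar>f s\<bar> \<le> K"
    and "\<And>s. s < c \<or> d < s \<Longrightarrow> f s = 0"
  shows "\<bar>integral {x..y} f\<bar> \<le> K * (d - c)"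
proof -
  have K: "0 \<le> K"
    using assms(3) abs_ge_zero order_trans by blast
  have eq: "integral {x..y} f = integral {max x c..min y d} f"
    by (rule integral_vanishing_outside[OF assms(1,4)])
  show ?thesis
  proof (cases "max x c \<le> min y d")
    case True
    have "\<bar>integral {x..y} f\<bar> \<le> K * (min y d - max x c)"
      unfolding eq by (rule abs_integral_le) (use True assms in auto)
    also have "\<dots> \<le> K * (d - c)"
    proof (rule mult_left_mono[OF _ K])
      show "min y d - max x c \<le> d - c"
        using min.cobounded2[of y d] max.cobounded2[of x c] by linarith
    qed
    finally show ?thesis .
  next
    case False
    then show ?thesis
      unfolding eq using K assms(2) by simp
  qed
qed

section \<open>Dyadic points and Haar functions\<close>

lemma t1_eq_midpoint: "t1 p m = (t0 p m + t2 p m) / 2"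
  unfolding t0_def t1_def t2_def by (simp add: field_simps)

lemma t2_minus_t0: "t2 p m - t0 p m = 1 / 2 ^ p"
  unfolding t0_def t2_def by (simp add: field_simps)

lemma t0_less_t2: "t0 p m < t2 p m"
  unfolding t0_def t2_def by (simp add: divide_strict_right_mono)

lemma t0_le_t1: "t0 p m \<le> t1 p m" and t1_le_t2: "t1 p m \<le> t2 p m"
  using t1_eq_midpoint[of p m] t0_less_t2[of p m] by simp_all

lemma t_halves:
  assumes "1 \<le> m"
  shows "t0 p m = t0 (Suc p) (2 * m - 1)" "t1 p m = t2 (Suc p) (2 * m - 1)"
    and "t1 p m = t0 (Suc p) (2 * m)" "t2 p m = t2 (Suc p) (2 * m)"
  using assms unfolding t0_def t1_def t2_def by (simp_all add: of_nat_diff field_simps)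

lemma dyadic_nested_or_disjoint:
  assumes "r \<le> q" "1 \<le> k" "1 \<le> n"
  shows "t0 r k \<le> t0 q n \<and> t2 q n \<le> t2 r k \<or> t2 r k \<le> t0 q n \<or> t2 q n \<le> t0 r k"
proof -
  define N :: nat where "N = 2 ^ (q - r)"
  have "0 < N" "(2::real) ^ q = 2 ^ r * N"
    using assms(1) by (simp_all add: N_def flip: power_add)
  then have scale: "t0 r k = real ((k - 1) * N) / 2 ^ q" "t2 r k = real (k * N) / 2 ^ q"
    and "t0 q n = real (n - 1) / 2 ^ q" "t2 q n = real n / 2 ^ q"
    using assms unfolding t0_def t2_def by (simp_all add: of_nat_diff)
  have "k * N = (k - 1) * N + N"
    using assms(2) by (simp add: diff_mult_distrib)
  then have "(k - 1) * N \<le> n - 1 \<and> n \<le> k * N \<or> k * N \<le> n - 1 \<or> n \<le> (k - 1) * N"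
    by linarith
  moreover have "real a / 2 ^ q \<le> real b / 2 ^ q \<longleftrightarrow> a \<le> b" for a b
    by (simp add: divide_le_cancel)
  ultimately show ?thesis
    unfolding scale \<open>t0 q n = _\<close> \<open>t2 q n = _\<close> by presburger
qed

lemma floor_on_dyadic_interval:
  assumes "1 \<le> k" "t0 r k \<le> s" "s < t2 r k"
  shows "\<lfloor>2 ^ r * s\<rfloor> = int k - 1"
  using assms unfolding t0_def t2_def floor_eq_iff by (simp add: field_simps)

lemma abs_haar_le: "\<bar>haar p m s\<bar> \<le> 2 ^ p"
  unfolding haar_def by auto

lemma haar_measurable: "haar p m \<in> borel_measurable borel"
  unfolding haar_def by measurable

lemma haar_integrable: "haar p m integrable_on {a..b}"
  by (rule integrable_on_if_bounded_measurable[OF haar_measurable abs_haar_le])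

text \<open>Since \<open>q < r\<close>, the breakpoints of \<open>haar q n\<close> are multiples of \<open>2 ^ - r\<close>.\<close>
lemma haar_eq_if_floor_eq:
  assumes "q < r" "\<lfloor>2 ^ r * s\<rfloor> = \<lfloor>2 ^ r * s'\<rfloor>"
  shows "haar q n s = haar q n s'"
proof -
  have dyadic: "of_int T / 2 ^ r \<le> x \<longleftrightarrow> T \<le> \<lfloor>2 ^ r * x\<rfloor>" "x < of_int T / 2 ^ r \<longleftrightarrow> \<lfloor>2 ^ r * x\<rfloor> < T"
    for T and x :: real
    by (simp_all add: le_floor_iff floor_less_iff field_simps)
  have "r = q + (r - q)" "r = Suc q + (r - Suc q)"
    using assms(1) by simp_all
  then have e0: "(2::real) ^ r = 2 ^ q * 2 ^ (r - q)" and e1: "(2::real) ^ r = 2 ^ Suc q * 2 ^ (r - Suc q)"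
    by (metis power_add)+
  have "t0 q n = of_int ((int n - 1) * 2 ^ (r - q)) / 2 ^ r"
    unfolding t0_def e0 by simp
  moreover have "t1 q n = of_int ((2 * int n - 1) * 2 ^ (r - Suc q)) / 2 ^ r"
    unfolding t1_def e1 by simp
  moreover have "t2 q n = of_int (int n * 2 ^ (r - q)) / 2 ^ r"
    unfolding t2_def e0 by simp
  ultimately show ?thesis
    using assms(2) unfolding haar_def by (simp only: dyadic)
qed

lemma haar_const_on_finer_dyadic:
  assumes "q < r" "1 \<le> k" "t0 r k \<le> s" "s < t2 r k"
  shows "haar q n s = haar q n (t0 r k)"
proof (rule haar_eq_if_floor_eq[OF assms(1)])
  show "\<lfloor>2 ^ r * s\<rfloor> = \<lfloor>2 ^ r * t0 r k\<rfloor>"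
    using floor_on_dyadic_interval[OF assms(2)] assms(3,4) t0_less_t2[of r k] by simp
qed

section \<open>Schauder functions\<close>

lemma schauder_increment:
  assumes "0 \<le> p" "0 \<le> a" "a \<le> s" "\<And>u. a < u \<Longrightarrow> u < s \<Longrightarrow> haar (nat p) m u = v"
  shows "schauder p m s = schauder p m a + v * (s - a)"
proof -
  have "integral {0..s} (haar (nat p) m) = integral {0..a} (haar (nat p) m) + integral {a..s} (haar (nat p) m)"
    using Henstock_Kurzweil_Integration.integral_combine[OF assms(2,3) haar_integrable] by simp
  moreover have "integral {a..s} (haar (nat p) m) = v * (s - a)"
    by (rule integral_const_interior) (use assms in auto)
  ultimately show ?thesis
    using assms(1) unfolding schauder_def by simp
qed

lemma schauder_index_0:
  assumes "0 \<le> p"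
  shows "schauder p 0 t = (if p = 0 then max 0 t else 0)"
proof (cases "0 \<le> t")
  case True
  have "schauder p 0 t = schauder p 0 0 + (if p = 0 then 1 else 0) * (t - 0)"
    by (rule schauder_increment) (use assms True in \<open>auto simp: haar_def\<close>)
  then show ?thesis
    using assms True by (simp add: schauder_def)
qed (use assms in \<open>simp add: schauder_def\<close>)

lemma schauder_tent:
  assumes "0 \<le> p" "1 \<le> m"
  shows "schauder p m t = 2 ^ nat p * max 0 (min (t - t0 (nat p) m) (t2 (nat p) m - t))"
proof -
  define P a b c where "P = nat p" and "a = t0 P m" and "b = t1 P m" and "c = t2 P m"
  define h :: real where "h = 1 / 2 ^ (P + 1)"
  have abc: "b = a + h" "c = a + 2 * h" "2 ^ P * h = 1 / 2" "0 \<le> a" "0 < h"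
    unfolding a_def b_def c_def h_def t0_def t1_def t2_def using assms(2) by (simp_all add: field_simps)
  have haar: "haar P m u = (if a \<le> u \<and> u < b then 2 ^ P else if b \<le> u \<and> u < c then - (2 ^ P) else 0)" for u
    using assms(2) unfolding haar_def a_def b_def c_def by simp
  note step = schauder_increment[OF assms(1), folded P_def]
  have S_below: "schauder p m x = 0" if "x \<le> a" for x
  proof (cases "0 \<le> x")
    case True
    have "schauder p m x = schauder p m 0 + 0 * (x - 0)"
      by (rule step) (use True that abc in \<open>auto simp: haar\<close>)
    then show ?thesis
      using assms(1) by (simp add: schauder_def)
  qed (use assms(1) in \<open>simp add: schauder_def\<close>)
  have S_up: "schauder p m x = 2 ^ P * (x - a)" if "a \<le> x" "x \<le> b" for x
    using step[of a x m "2 ^ P"] S_below[of a] that abc by (simp add: haar)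
  have S_down: "schauder p m x = 1 / 2 - 2 ^ P * (x - b)" if "b \<le> x" "x \<le> c" for x
    using step[of b x m "- (2 ^ P)"] S_up[of b] that abc by (simp add: haar algebra_simps)
  have S_above: "schauder p m x = 0" if "c \<le> x" for x
    using step[of c x m 0] S_down[of c] that abc by (simp add: haar algebra_simps)
  consider "t \<le> a" | "a \<le> t" "t \<le> b" | "b \<le> t" "t \<le> c" | "c \<le> t"
    by linarith
  then have "schauder p m t = 2 ^ P * max 0 (min (t - a) (c - t))"
  proof cases
    case 1
    then show ?thesis
      using S_below abc by simp
  next
    case 2
    then show ?thesis
      using S_up abc by (simp add: min_def)
  next
    case 3
    then have "min (t - a) (c - t) = c - t"
      using abc by (simp add: min_def)
    then show ?thesis
      using S_down 3 abc by (simp add: algebra_simps)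
  next
    case 4
    then show ?thesis
      using S_above abc by simp
  qed
  then show ?thesis
    unfolding P_def a_def c_def .
qed

lemma schauder_measurable: "schauder p m \<in> borel_measurable borel"
proof -
  consider "p < 0" | "0 \<le> p" "m = 0" | "0 \<le> p" "1 \<le> m"
    by linarith
  then show ?thesis
  proof cases
    case 1
    then have "schauder p m = (\<lambda>_. 1)"
      by (simp add: schauder_def fun_eq_iff)
    then show ?thesis
      by simp
  next
    case 2
    then have "schauder p m = (\<lambda>t. if p = 0 then max 0 t else 0)"
      by (simp add: schauder_index_0 fun_eq_iff)
    then show ?thesis
      by simp
  next
    case 3
    then have "schauder p m = (\<lambda>t. 2 ^ nat p * max 0 (min (t - t0 (nat p) m) (t2 (nat p) m - t)))"
      by (simp add: schauder_tent fun_eq_iff)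
    then show ?thesis
      by simp
  qed
qed

lemma abs_schauder_le_half:
  assumes "0 \<le> p" "1 \<le> m"
  shows "\<bar>schauder p m t\<bar> \<le> 1 / 2"
proof -
  define M where "M = max 0 (min (t - t0 (nat p) m) (t2 (nat p) m - t))"
  have "0 < (1::real) / 2 ^ nat p"
    by simp
  then have "M \<le> 1 / 2 * (1 / 2 ^ nat p)"
    using t2_minus_t0[of "nat p" m] unfolding M_def by linarith
  then have "2 ^ nat p * M \<le> 2 ^ nat p * (1 / 2 * (1 / 2 ^ nat p))"
    by (rule mult_left_mono) simp
  moreover have "0 \<le> 2 ^ nat p * M"
    unfolding M_def by simp
  moreover have "schauder p m t = 2 ^ nat p * M"
    unfolding M_def by (rule schauder_tent[OF assms])
  moreover have "2 ^ nat p * (1 / 2 * (1 / 2 ^ nat p)) = (1 / 2 :: real)"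
    by simp
  ultimately show ?thesis
    unfolding abs_le_iff by linarith
qed

lemma schauder_eq_0_outside:
  assumes "0 \<le> p" "1 \<le> m" "t \<le> t0 (nat p) m \<or> t2 (nat p) m \<le> t"
  shows "schauder p m t = 0"
proof -
  have "min (t - t0 (nat p) m) (t2 (nat p) m - t) \<le> 0"
    using assms(3) by (auto simp: min_le_iff_disj)
  then have "max 0 (min (t - t0 (nat p) m) (t2 (nat p) m - t)) = 0"
    by (rule max_absorb1)
  then show ?thesis
    using schauder_tent[OF assms(1,2), of t] by (metis mult_zero_right)
qed

lemma abs_schauder_le: "\<bar>schauder p m t\<bar> \<le> max 1 \<bar>t\<bar>"
proof -
  consider "p < 0" | "0 \<le> p" "m = 0" | "0 \<le> p" "1 \<le> m"
    by linarith
  then show ?thesis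
  proof cases
    case 1
    then show ?thesis
      by (simp add: schauder_def)
  next
    case 2
    then show ?thesis
      using abs_ge_self[of t] by (simp add: schauder_index_0 le_max_iff_disj)
  next
    case 3
    then show ?thesis
      using abs_schauder_le_half[OF 3, of t] by linarith
  qed
qed

lemma schauder_haar_integrable: "(\<lambda>s. schauder p m s * haar q n s) integrable_on {a..b}"
proof (rule integrable_on_if_bounded_measurable)
  show "(\<lambda>s. schauder p m s * haar q n s) \<in> borel_measurable borel"
    using schauder_measurable haar_measurable by measurable
  fix s assume "s \<in> {a..b}"
  then have "\<bar>s\<bar> \<le> \<bar>a\<bar> + \<bar>b\<bar>"
    unfolding abs_le_iff using abs_ge_minus_self[of a] abs_ge_self[of b] by auto
  then have "max 1 \<bar>s\<bar> \<le> 1 + \<bar>a\<bar> + \<bar>b\<bar>"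
    using abs_ge_zero[of a] abs_ge_zero[of b] by (intro max.boundedI) linarith+
  then have "\<bar>schauder p m s\<bar> \<le> 1 + \<bar>a\<bar> + \<bar>b\<bar>"
    using abs_schauder_le[of p m s] by linarith
  moreover have "0 \<le> 1 + \<bar>a\<bar> + \<bar>b\<bar>"
    using abs_ge_zero[of a] abs_ge_zero[of b] by linarith
  ultimately show "\<bar>schauder p m s * haar q n s\<bar> \<le> (1 + \<bar>a\<bar> + \<bar>b\<bar>) * 2 ^ q"
    unfolding abs_mult by (rule mult_mono[OF _ abs_haar_le _ abs_ge_zero])
qed

lemma two_power_nat_eq_powr: "0 \<le> p \<Longrightarrow> (2::real) ^ nat p = 2 powr p"
  by (simp add: powr_realpow[symmetric])

lemma schauder_affine_on_finer_dyadic: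
  assumes "p < int r" "1 \<le> k"
  obtains \<alpha> \<beta> where "\<bar>\<beta>\<bar> \<le> 2 powr p"
    and "\<And>s. t0 r k \<le> s \<Longrightarrow> s \<le> t2 r k \<Longrightarrow> schauder p m s = \<alpha> + \<beta> * s"
proof (cases "p < 0")
  case True
  show ?thesis
  proof (rule that)
    show "\<bar>0\<bar> \<le> 2 powr p"
      by simp
    show "schauder p m s = 1 + 0 * s" for s
      using True by (simp add: schauder_def)
  qed
next
  case False
  then have "0 \<le> p" "nat p < r"
    using assms(1) by linarith+
  define a \<beta> where "a = t0 r k" and "\<beta> = haar (nat p) m a"
  have "0 \<le> a"
    unfolding a_def t0_def using assms(2) by simp
  have slope: "\<bar>\<beta>\<bar> \<le> 2 powr p"
    using abs_haar_le[of "nat p" m a] two_power_nat_eq_powr[OF \<open>0 \<le> p\<close>] by (simp add: \<beta>_def)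
  have affine: "schauder p m s = (schauder p m a - \<beta> * a) + \<beta> * s" if "a \<le> s" "s \<le> t2 r k" for s
  proof -
    have "haar (nat p) m u = \<beta>" if "a < u" "u < s" for u
    proof -
      have "t0 r k \<le> u" "u < t2 r k"
        using that \<open>s \<le> t2 r k\<close> unfolding a_def by linarith+
      then show ?thesis
        unfolding \<beta>_def a_def by (rule haar_const_on_finer_dyadic[OF \<open>nat p < r\<close> assms(2)])
    qed
    then have "schauder p m s = schauder p m a + \<beta> * (s - a)"
      by (rule schauder_increment[OF \<open>0 \<le> p\<close> \<open>0 \<le> a\<close> \<open>a \<le> s\<close>])
    then show ?thesis
      by (simp add: algebra_simps)
  qed
  show ?thesis
  proof (rule that)
    show "\<bar>\<beta>\<bar> \<le> 2 powr p"
      by (fact slope)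
    show "schauder p m s = (schauder p m a - \<beta> * a) + \<beta> * s" if "t0 r k \<le> s" "s \<le> t2 r k" for s
      using that by (intro affine) (simp_all add: a_def)
  qed
qed

section \<open>Coefficients of primitives\<close>

lemma coeff_primitive_eq_halves_diff:
  assumes "\<And>a b. g integrable_on {a..b}" "0 \<le> i" "1 \<le> j"
  shows "coeff (\<lambda>t. integral {0..t} g) i j
    = integral {t0 (nat i) j..t1 (nat i) j} g - integral {t1 (nat i) j..t2 (nat i) j} g"
proof -
  define a b c where "a = t0 (nat i) j" and "b = t1 (nat i) j" and "c = t2 (nat i) j"
  have "0 \<le> a"
    unfolding a_def t0_def using assms(3) by simp
  moreover have "a \<le> b" "b \<le> c"
    unfolding a_def b_def c_def by (rule t0_le_t1 t1_le_t2)+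
  ultimately have "integral {0..b} g = integral {0..a} g + integral {a..b} g"
    and "integral {0..c} g = integral {0..b} g + integral {b..c} g"
    using Henstock_Kurzweil_Integration.integral_combine[OF _ _ assms(1)] by (metis order_trans)+
  then show ?thesis
    using assms(2,3) unfolding coeff_def a_def b_def c_def by simp
qed

text \<open>For \<open>i < 0\<close> the coefficient is \<open>F 0 = 0\<close>, for \<open>i > 0 = j\<close> it is \<open>0\<close>, and for
  \<open>i = j = 0\<close> it is \<open>F 1 - F 0\<close>, the sum rather than the difference of the integrals over
  the two halves of \<open>[t0 0 1, t2 0 1] = [0, 1]\<close>.\<close>
lemma abs_coeff_primitive_le:
  fixes i :: int and j :: nat
  assumes "\<And>a b. g integrable_on {a..b}"
  defines "J \<equiv> max j 1"
  shows "\<bar>coeff (\<lambda>t. integral {0..t} g) i j\<bar>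
    \<le> \<bar>integral {t0 (nat i) J..t1 (nat i) J} g\<bar> + \<bar>integral {t1 (nat i) J..t2 (nat i) J} g\<bar>"
proof -
  consider "i < 0" | "0 \<le> i" "1 \<le> j" | "0 < i" "j = 0" | "i = 0" "j = 0"
    by linarith
  then show ?thesis
  proof cases
    case 2
    then show ?thesis
      using coeff_primitive_eq_halves_diff[OF assms(1) 2] unfolding J_def
      by (simp add: abs_triangle_ineq4)
  next
    case 4
    have ends: "t0 0 1 = 0" "t2 0 1 = 1"
      unfolding t0_def t2_def by simp_all
    then have "0 \<le> t1 0 1" "t1 0 1 \<le> 1"
      using t0_le_t1[of 0 1] t1_le_t2[of 0 1] by simp_all
    then have "integral {0..1} g = integral {0..t1 0 1} g + integral {t1 0 1..1} g"
      using Henstock_Kurzweil_Integration.integral_combine[OF _ _ assms(1)] by simp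
    then show ?thesis
      using 4 ends unfolding coeff_def J_def by (simp add: abs_triangle_ineq)
  qed (simp_all add: coeff_def)
qed

lemma abs_coeff_primitive_le_bounded:
  assumes "\<And>a b. g integrable_on {a..b}" "valid_index i j"
    and "\<And>s. 0 \<le> s \<Longrightarrow> s \<le> 1 \<Longrightarrow> \<bar>g s\<bar> \<le> K"
  shows "\<bar>coeff (\<lambda>t. integral {0..t} g) i j\<bar> \<le> K / 2 ^ nat i"
proof -
  define I J where "I = nat i" and "J = max j 1"
  have "1 \<le> J" "J \<le> 2 ^ I"
    using assms(2) unfolding I_def J_def valid_index_def by auto
  then have "0 \<le> t0 I J" "t2 I J \<le> 1"
    unfolding t0_def t2_def by simp_all
  then have "\<bar>integral {t0 I J..t1 I J} g\<bar> \<le> K * (t1 I J - t0 I J)"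
    and "\<bar>integral {t1 I J..t2 I J} g\<bar> \<le> K * (t2 I J - t1 I J)"
    using t0_le_t1[of I J] t1_le_t2[of I J]
    by (intro abs_integral_le assms(1,3); simp)+
  moreover have "K * (t1 I J - t0 I J) + K * (t2 I J - t1 I J) = K * (t2 I J - t0 I J)"
    by (simp add: algebra_simps)
  moreover have "K * (t2 I J - t0 I J) = K / 2 ^ I"
    by (simp add: t2_minus_t0)
  ultimately show ?thesis
    using abs_coeff_primitive_le[OF assms(1), of i j, folded I_def J_def]
    unfolding I_def[symmetric] by linarith
qed

lemma abs_coeff_primitive_le_vanishing_outside:
  assumes "\<And>a b. g integrable_on {a..b}" "c \<le> d" "\<And>s. \<bar>g s\<bar> \<le> K"
    and "\<And>s. s < c \<or> d < s \<Longrightarrow> g s = 0"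
  shows "\<bar>coeff (\<lambda>t. integral {0..t} g) i j\<bar> \<le> 2 * K * (d - c)"
proof -
  define I J where "I = nat i" and "J = max j 1"
  have "\<bar>integral {t0 I J..t1 I J} g\<bar> \<le> K * (d - c)"
    by (rule abs_integral_le_vanishing_outside[OF assms])
  moreover have "\<bar>integral {t1 I J..t2 I J} g\<bar> \<le> K * (d - c)"
    by (rule abs_integral_le_vanishing_outside[OF assms])
  ultimately show ?thesis
    using abs_coeff_primitive_le[OF assms(1), of i j, folded I_def J_def] by linarith
qed

lemma abs_integral_dyadic_le_abs_integral_support:
  fixes g :: "real \<Rightarrow> real"
  assumes "\<And>a b. g integrable_on {a..b}" "r \<le> q" "1 \<le> k" "1 \<le> n"
    and "\<And>s. s < t0 q n \<or> t2 q n < s \<Longrightarrow> g s = 0"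
  shows "\<bar>integral {t0 r k..t2 r k} g\<bar> \<le> \<bar>integral {t0 q n..t2 q n} g\<bar>"
proof -
  have eq: "integral {t0 r k..t2 r k} g = integral {max (t0 r k) (t0 q n)..min (t2 r k) (t2 q n)} g"
    by (rule integral_vanishing_outside[OF assms(1,5)])
  have degenerate: "integral {u..v} g = 0" if "v \<le> u" for u v
    using that by (cases "u = v") auto
  consider "t0 r k \<le> t0 q n" "t2 q n \<le> t2 r k" | "t2 r k \<le> t0 q n" | "t2 q n \<le> t0 r k"
    using dyadic_nested_or_disjoint[OF assms(2-4)] by blast
  then show ?thesis
  proof cases
    case 1
    then show ?thesis
      unfolding eq by simp
  next
    case 2
    then show ?thesis
      unfolding eq using t0_less_t2[of r k] by (simp add: degenerate)
  next
    case 3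
    then show ?thesis
      unfolding eq using t0_less_t2[of q n] by (simp add: degenerate)
  qed
qed

section \<open>The four regimes\<close>

lemma dyadic_scale_eq_powr:
  "(2::real) ^ a * 2 powr x * (1 / 2 ^ b)\<^sup>2 = 2 powr (real a + x - 2 * real b)"
proof -
  have "(2::real) powr (2 * real b) = 2 ^ b * 2 ^ b"
    by (metis mult_2 powr_add powr_realpow zero_less_numeral)
  then show ?thesis
    by (simp add: powr_add powr_diff powr_realpow power2_eq_square)
qed

lemma double_two_powr_minus_2_le: "2 * 2 powr (x - 2) \<le> (2::real) powr x"
proof -
  have "2 powr (x - 2) = 2 powr x / (4::real)"
    by (simp add: powr_diff)
  moreover have "0 < (2::real) powr x"
    by simp
  ultimately show ?thesis
    by linarith
qed

lemma haar_eq_0_outside: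
  assumes "1 \<le> n" "s < t0 q n \<or> t2 q n \<le> s"
  shows "haar q n s = 0"
  using assms t0_le_t1[of q n] t1_le_t2[of q n] unfolding haar_def by auto

lemma abs_schauder_haar_le_on_unit_interval:
  assumes "0 \<le> s" "s \<le> 1"
  shows "\<bar>schauder p m s * haar q n s\<bar> \<le> 2 ^ q"
proof -
  have "\<bar>schauder p m s\<bar> \<le> 1"
    using abs_schauder_le[of p m s] assms by simp
  then have "\<bar>schauder p m s\<bar> * \<bar>haar q n s\<bar> \<le> 1 * 2 ^ q"
    by (rule mult_mono[OF _ abs_haar_le]) simp_all
  then show ?thesis
    by (simp add: abs_mult)
qed

text \<open>On the support of \<open>haar q n\<close> the function \<open>schauder p m\<close> is affine, and the Haar function
  turns its integral into the difference of the integrals over the two halves.\<close>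
lemma abs_integral_schauder_haar_support_le:
  assumes "p < int q" "1 \<le> n"
  shows "\<bar>integral {t0 q n..t2 q n} (\<lambda>s. schauder p m s * haar q n s)\<bar>
    \<le> 2 powr (real_of_int p - real q - 2)"
proof -
  obtain \<alpha> \<beta> where slope: "\<bar>\<beta>\<bar> \<le> 2 powr p"
    and affine: "\<And>s. t0 q n \<le> s \<Longrightarrow> s \<le> t2 q n \<Longrightarrow> schauder p m s = \<alpha> + \<beta> * s"
    using schauder_affine_on_finer_dyadic[where m = m, OF assms] by blast
  define a b where "a = t0 q n" and "b = t2 q n"
  define g where "g s = schauder p m s * haar q n s" for s
  have "a \<le> b" "t1 q n = (a + b) / 2" "(b - a) / 2 = 1 / 2 ^ (q + 1)"
    unfolding a_def b_def using t0_less_t2[of q n] t1_eq_midpoint[of q n] t2_minus_t0[of q n]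
    by (simp_all add: field_simps)
  have g_lo: "g s = 2 ^ q * schauder p m s" if "a < s" "s < (a + b) / 2" for s
    using that assms(2) \<open>t1 q n = _\<close> unfolding g_def haar_def a_def by simp
  have g_hi: "g s = - (2 ^ q) * schauder p m s" if "(a + b) / 2 < s" "s < b" for s
    using that assms(2) \<open>t1 q n = _\<close> unfolding g_def haar_def b_def by simp
  have "integral {a..b} g = integral {a..(a + b) / 2} g + integral {(a + b) / 2..b} g"
    using Henstock_Kurzweil_Integration.integral_combine[OF _ _ schauder_haar_integrable] \<open>a \<le> b\<close>
    unfolding g_def by simp
  also have "\<dots> = 2 ^ q * (integral {a..(a + b) / 2} (schauder p m) - integral {(a + b) / 2..b} (schauder p m))"
    using integral_cong_interior[of a "(a + b) / 2" g, OF g_lo]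
      integral_cong_interior[of "(a + b) / 2" b g, OF g_hi]
    by (simp add: algebra_simps)
  also have "\<dots> = 2 ^ q * (- \<beta> * (1 / 2 ^ (q + 1))\<^sup>2)"
    using integral_halves_diff_affine[OF \<open>a \<le> b\<close>, of "schauder p m" \<alpha> \<beta>] affine \<open>(b - a) / 2 = _\<close>
    unfolding a_def b_def by simp
  finally have "\<bar>integral {a..b} g\<bar> = 2 ^ q * \<bar>\<beta>\<bar> * (1 / 2 ^ (q + 1))\<^sup>2"
    by (simp add: abs_mult)
  also have "\<dots> \<le> 2 ^ q * 2 powr p * (1 / 2 ^ (q + 1))\<^sup>2"
    using slope by (intro mult_right_mono mult_left_mono) simp_all
  also have "\<dots> = 2 powr (real_of_int p - real q - 2)"
    unfolding dyadic_scale_eq_powr by (simp add: algebra_simps)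
  finally show ?thesis
    unfolding g_def a_def b_def .
qed

text \<open>On a dyadic interval finer than both functions, \<open>haar q n\<close> is constant and
  \<open>schauder p m\<close> affine.\<close>
lemma abs_halves_diff_schauder_haar_le:
  assumes "q < I" "p < int I" "1 \<le> j"
  shows "\<bar>integral {t0 I j..t1 I j} (\<lambda>s. schauder p m s * haar q n s)
      - integral {t1 I j..t2 I j} (\<lambda>s. schauder p m s * haar q n s)\<bar>
    \<le> 2 powr (real_of_int p + real q - 2 * real I - 2)"
proof -
  obtain \<alpha> \<beta> where slope: "\<bar>\<beta>\<bar> \<le> 2 powr p"
    and affine: "\<And>s. t0 I j \<le> s \<Longrightarrow> s \<le> t2 I j \<Longrightarrow> schauder p m s = \<alpha> + \<beta> * s"
    using schauder_affine_on_finer_dyadic[where m = m, OF assms(2,3)] by blast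
  define a b c where "a = t0 I j" and "b = t2 I j" and "c = haar q n a"
  have "a \<le> b" "t1 I j = (a + b) / 2" "(b - a) / 2 = 1 / 2 ^ (I + 1)"
    unfolding a_def b_def using t0_less_t2[of I j] t1_eq_midpoint[of I j] t2_minus_t0[of I j]
    by (simp_all add: field_simps)
  have product_affine: "schauder p m s * haar q n s = c * \<alpha> + (c * \<beta>) * s" if "a < s" "s < b" for s
  proof -
    have "haar q n s = c"
      unfolding c_def a_def using that by (intro haar_const_on_finer_dyadic assms(1,3)) (simp_all add: a_def b_def)
    then show ?thesis
      using affine[of s] that unfolding a_def b_def by (simp add: algebra_simps)
  qed
  have "integral {a..(a + b) / 2} (\<lambda>s. schauder p m s * haar q n s)
      - integral {(a + b) / 2..b} (\<lambda>s. schauder p m s * haar q n s) = - (c * \<beta>) * ((b - a) / 2)\<^sup>2"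
    by (rule integral_halves_diff_affine[OF \<open>a \<le> b\<close> product_affine])
  then have "integral {a..(a + b) / 2} (\<lambda>s. schauder p m s * haar q n s)
      - integral {(a + b) / 2..b} (\<lambda>s. schauder p m s * haar q n s) = - (c * \<beta>) * (1 / 2 ^ (I + 1))\<^sup>2"
    unfolding \<open>(b - a) / 2 = _\<close> .
  then have "\<bar>integral {t0 I j..t1 I j} (\<lambda>s. schauder p m s * haar q n s)
      - integral {t1 I j..t2 I j} (\<lambda>s. schauder p m s * haar q n s)\<bar> = \<bar>c\<bar> * \<bar>\<beta>\<bar> * (1 / 2 ^ (I + 1))\<^sup>2"
    unfolding \<open>t1 I j = _\<close> a_def[symmetric] b_def[symmetric] by (simp add: abs_mult)
  also have "\<dots> \<le> 2 ^ q * 2 powr p * (1 / 2 ^ (I + 1))\<^sup>2"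
    using slope abs_haar_le[of q n a] unfolding c_def by (intro mult_right_mono mult_mono) simp_all
  also have "\<dots> = 2 powr (real_of_int p + real q - 2 * real I - 2)"
    unfolding dyadic_scale_eq_powr by (simp add: algebra_simps)
  finally show ?thesis .
qed

lemma abs_coeff_le_haar_level_max:
  fixes i p :: int and q j m n :: nat
  assumes "p < int q" "i < int q"
  defines "F \<equiv> \<lambda>t. integral {0..t} (\<lambda>s. schauder p m s * haar q n s)"
  shows "\<bar>coeff F i j\<bar> \<le> 2 powr (real_of_int p - real q)"
proof -
  consider "i < 0" | "0 \<le> i" "n = 0" | "0 \<le> i" "1 \<le> n"
    by linarith
  then show ?thesis
  proof cases
    case 1
    then show ?thesis
      unfolding F_def coeff_def by simp
  next
    case 2
    then have "haar q n = (\<lambda>_. 0)"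
      using assms(2) by (auto simp: haar_def)
    then show ?thesis
      unfolding F_def coeff_def by simp
  next
    case 3
    define I J where "I = nat i" and "J = max j 1"
    have "1 \<le> J" "Suc I \<le> q"
      using 3 assms(2) unfolding I_def J_def by auto
    have vanishing: "schauder p m s * haar q n s = 0" if "s < t0 q n \<or> t2 q n < s" for s
      using haar_eq_0_outside[OF 3(2)] that by auto
    have dyadic: "\<bar>integral {t0 (Suc I) k..t2 (Suc I) k} (\<lambda>s. schauder p m s * haar q n s)\<bar>
        \<le> 2 powr (real_of_int p - real q - 2)" if "1 \<le> k" for k
      using abs_integral_dyadic_le_abs_integral_support[OF schauder_haar_integrable
          \<open>Suc I \<le> q\<close> that 3(2) vanishing]
        abs_integral_schauder_haar_support_le[OF assms(1) 3(2), of m]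
      by linarith
    have "\<bar>integral {t0 I J..t1 I J} (\<lambda>s. schauder p m s * haar q n s)\<bar>
        \<le> 2 powr (real_of_int p - real q - 2)"
      using dyadic[of "2 * J - 1"] \<open>1 \<le> J\<close> unfolding t_halves(1,2)[OF \<open>1 \<le> J\<close>] by simp
    moreover have "\<bar>integral {t1 I J..t2 I J} (\<lambda>s. schauder p m s * haar q n s)\<bar>
        \<le> 2 powr (real_of_int p - real q - 2)"
      using dyadic[of "2 * J"] \<open>1 \<le> J\<close> unfolding t_halves(3,4)[OF \<open>1 \<le> J\<close>] by simp
    ultimately have "\<bar>coeff F i j\<bar> \<le> 2 * 2 powr (real_of_int p - real q - 2)"
      using abs_coeff_primitive_le[OF schauder_haar_integrable, of p m q n i j, folded I_def J_def F_def]
      by linarith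
    also have "\<dots> \<le> 2 powr (real_of_int p - real q)"
      by (rule double_two_powr_minus_2_le)
    finally show ?thesis .
  qed
qed

lemma abs_coeff_le_coeff_level_max:
  fixes i p :: int and q j m n :: nat
  assumes "int q < i" "p < i"
  defines "F \<equiv> \<lambda>t. integral {0..t} (\<lambda>s. schauder p m s * haar q n s)"
  shows "\<bar>coeff F i j\<bar> \<le> 2 powr (real_of_int p + real q - 2 * real_of_int i)"
proof (cases "j = 0")
  case True
  then show ?thesis
    using assms(1) unfolding coeff_def by simp
next
  case False
  define I where "I = nat i"
  have "q < I" "p < int I" "1 \<le> j" "0 \<le> i"
    using assms(1,2) False unfolding I_def by auto
  have "\<bar>coeff F i j\<bar> \<le> 2 powr (real_of_int p + real q - 2 * real I - 2)"
    using coeff_primitive_eq_halves_diff[OF schauder_haar_integrable \<open>0 \<le> i\<close> \<open>1 \<le> j\<close>,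
        of p m q n, folded I_def F_def]
      abs_halves_diff_schauder_haar_le[OF \<open>q < I\<close> \<open>p < int I\<close> \<open>1 \<le> j\<close>, of m n]
    by simp
  also have "\<dots> \<le> 2 powr (real_of_int p + real q - 2 * real_of_int i)"
    unfolding I_def using \<open>0 \<le> i\<close> by simp
  finally show ?thesis .
qed

lemma abs_coeff_le_schauder_level_max:
  fixes i p :: int and q j m n :: nat
  assumes "valid_index i j" "int q \<le> p" "i \<le> p"
  defines "F \<equiv> \<lambda>t. integral {0..t} (\<lambda>s. schauder p m s * haar q n s)"
  shows "\<bar>coeff F i j\<bar> \<le> 2 powr (real q - real_of_int p)"
proof -
  have "0 \<le> p"
    using assms(2) by linarith
  consider "m = 0" "p = 0" | "m = 0" "0 < p" | "1 \<le> m"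
    using \<open>0 \<le> p\<close> by linarith
  then show ?thesis
  proof cases
    case 1
    then have "q = 0" "nat i = 0"
      using assms(2,3) by auto
    then show ?thesis
      using abs_coeff_primitive_le_bounded[OF schauder_haar_integrable assms(1)
          abs_schauder_haar_le_on_unit_interval, of p m q n, folded F_def] 1
      by simp
  next
    case 2
    then have "schauder p m = (\<lambda>_. 0)"
      by (simp add: schauder_index_0 fun_eq_iff)
    then show ?thesis
      unfolding F_def coeff_def by simp
  next
    case 3
    define P where "P = nat p"
    have "\<bar>schauder p m s * haar q n s\<bar> \<le> 1 / 2 * 2 ^ q" for s
      unfolding abs_mult using abs_schauder_le_half[OF \<open>0 \<le> p\<close> 3] abs_haar_le[of q n s]
      by (intro mult_mono) simp_all
    moreover have "schauder p m s * haar q n s = 0" if "s < t0 P m \<or> t2 P m < s" for s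
      using schauder_eq_0_outside[OF \<open>0 \<le> p\<close> 3, of s] that unfolding P_def by auto
    ultimately have "\<bar>coeff F i j\<bar> \<le> 2 * (1 / 2 * 2 ^ q) * (t2 P m - t0 P m)"
      unfolding F_def
      by (intro abs_coeff_primitive_le_vanishing_outside schauder_haar_integrable less_imp_le[OF t0_less_t2])
    also have "\<dots> = 2 powr (real q - real_of_int p)"
      unfolding t2_minus_t0 P_def two_power_nat_eq_powr[OF \<open>0 \<le> p\<close>]
      by (simp add: powr_diff powr_realpow)
    finally show ?thesis .
  qed
qed

lemma abs_coeff_le_1_equal_levels:
  fixes i p :: int and q j m n :: nat
  assumes "valid_index i j" "int q = i"
  defines "F \<equiv> \<lambda>t. integral {0..t} (\<lambda>s. schauder p m s * haar q n s)"
  shows "\<bar>coeff F i j\<bar> \<le> 1"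
proof -
  have "nat i = q"
    using assms(2) by simp
  then show ?thesis
    using abs_coeff_primitive_le_bounded[OF schauder_haar_integrable assms(1)
        abs_schauder_haar_le_on_unit_interval, of p m q n, folded F_def]
    by simp
qed

theorem mainTheorem4:
  fixes i p :: int and q j m n :: nat and F :: "real \<Rightarrow> real"
  assumes "valid_index i j" and "valid_index p m" and "n \<le> 2 ^ q"
  defines "F \<equiv> (\<lambda>t. integral {0..t} (\<lambda>s. schauder p m s * haar q n s))"
  shows "if p < int q \<and> int q = i
         then \<bar>coeff F i j\<bar> \<le> 1
         else \<bar>coeff F i j\<bar> \<le> 2 powr (real_of_int (- 2 * max i (max p (int q)) + p + int q))"
proof (cases "p < int q \<and> int q = i")
  case True
  then show ?thesis
    using abs_coeff_le_1_equal_levels[OF assms(1)] unfolding F_def by simp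
next
  case False
  then consider "p < int q" "i < int q" | "int q < i" "p < i" | "int q \<le> p" "i \<le> p"
    by linarith
  then have "\<bar>coeff F i j\<bar> \<le> 2 powr (real_of_int (- 2 * max i (max p (int q)) + p + int q))"
  proof cases
    case 1
    then have "real_of_int (- 2 * max i (max p (int q)) + p + int q) = real_of_int p - real q"
      by simp
    then show ?thesis
      using abs_coeff_le_haar_level_max[OF 1, of m n j, folded F_def] by (simp only:)
  next
    case 2
    then have "real_of_int (- 2 * max i (max p (int q)) + p + int q) = real_of_int p + real q - 2 * real_of_int i"
      by simp
    then show ?thesis
      using abs_coeff_le_coeff_level_max[OF 2, of m n j, folded F_def] by (simp only:)
  next
    case 3
    then have "real_of_int (- 2 * max i (max p (int q)) + p + int q) = real q - real_of_int p"
      by simp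
    then show ?thesis
      using abs_coeff_le_schauder_level_max[OF assms(1) 3, of m n, folded F_def] by (simp only:)
  qed
  then show ?thesis
    unfolding if_not_P[OF False] .
qed

end
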